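(* Let $x_0\in(0,1)$ and let $a,b$ satisfy one of the conditions (H2), (H3), (H4) of the context. Then there exists a constant $\overline C_{HP}>0$ such that \[\int_0^1\frac{u^2}{ab}\,dx\le\overline C_{HP}\int_0^1(u')^2dx\] for every $u\in\mathcal K_{a,b}:=\{u\in L^2_{\frac1a}(0,1)\cap H^1(0,1): u/\sqrt{ab}\in L^2(0,1)\}$ with $u'(0)=u'(1)=0$.
   Context: $a,b:[0,1]\to\mathbb R$ with $a(x_0)=b(x_0)=0$, $a,b>0$ on $[0,1]\setminus\{x_0\}$. $L^2_{\frac1a}(0,1)=\{u\in L^2:\int u^2/a<\infty\}$. Degeneracy types: (WWD) $a,b\in W^{1,1}(0,1)$ and $K_1,K_2\in(0,1)$ with $(x-x_0)a'\le K_1a$, $(x-x_0)b'\le K_2b$ a.e.; (SSD) $a,b\in W^{1,\infty}(0,1)$ with the same inequalities and $K_1,K_2\in[1,2)$; (WSD) $a\in W^{1,1}$, $b\in W^{1,\infty}$, $K_1\in(0,1)$, $K_2\in[1,2)$; (SWD) $a\in W^{1,\infty}$, $b\in W^{1,1}$, $K_1\in[1,2)$, $K_2\in(0,1)$. (H2): (WWD) with $1\le K_1+K_2\le2$ and there exist $c_1,c_2>0$ with $|x-x_0|^{K_1}\ge c_1a(x)$, $|x-x_0|^{K_2}\ge c_2b(x)$ for all $x\in[0,1]$; (H3): (WSD) or (SWD) with $K_1+K_2\le2$ and such $c_1,c_2$; (H4): (SSD) with $K_1=K_2=1$. *)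

theory Defs
  imports "HOL-Analysis.Analysis"
begin

text \<open>Absolute continuity on [0,1] with (weak) derivative g in L^1(0,1):
  u x = u 0 + int_0^x g for all x in [0,1].\<close>
definition weak_deriv_01 :: "(real \<Rightarrow> real) \<Rightarrow> (real \<Rightarrow> real) \<Rightarrow> bool" where
  "weak_deriv_01 u g \<longleftrightarrow> g absolutely_integrable_on {0..1} \<and>
     (\<forall>x\<in>{0..1}. u x = u 0 + integral {0..x} g)"

definition W11_01 :: "(real \<Rightarrow> real) \<Rightarrow> (real \<Rightarrow> real) \<Rightarrow> bool" where
  "W11_01 a a' \<longleftrightarrow> weak_deriv_01 a a'"

definition W1inf_01 :: "(real \<Rightarrow> real) \<Rightarrow> (real \<Rightarrow> real) \<Rightarrow> bool" where
  "W1inf_01 a a' \<longleftrightarrow> weak_deriv_01 a a' \<and>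
     (\<exists>M. AE x in lebesgue. x \<in> {0..1} \<longrightarrow> \<bar>a' x\<bar> \<le> M)"

definition H1_01 :: "(real \<Rightarrow> real) \<Rightarrow> (real \<Rightarrow> real) \<Rightarrow> bool" where
  "H1_01 u g \<longleftrightarrow> (\<lambda>x. (u x)\<^sup>2) integrable_on {0..1} \<and> weak_deriv_01 u g \<and>
     (\<lambda>x. (g x)\<^sup>2) integrable_on {0..1}"

definition weakly_deg :: "(real \<Rightarrow> real) \<Rightarrow> real \<Rightarrow> real \<Rightarrow> bool" where
  "weakly_deg a x0 K \<longleftrightarrow> 0 < K \<and> K < 1 \<and>
     (\<exists>a'. W11_01 a a' \<and> (AE x in lebesgue. x \<in> {0..1} \<longrightarrow> (x - x0) * a' x \<le> K * a x))"

definition strongly_deg :: "(real \<Rightarrow> real) \<Rightarrow> real \<Rightarrow> real \<Rightarrow> bool" where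
  "strongly_deg a x0 K \<longleftrightarrow> 1 \<le> K \<and> K < 2 \<and>
     (\<exists>a'. W1inf_01 a a' \<and> (AE x in lebesgue. x \<in> {0..1} \<longrightarrow> (x - x0) * a' x \<le> K * a x))"

definition WWD where "WWD a b x0 K1 K2 \<longleftrightarrow> weakly_deg a x0 K1 \<and> weakly_deg b x0 K2"
definition SSD where "SSD a b x0 K1 K2 \<longleftrightarrow> strongly_deg a x0 K1 \<and> strongly_deg b x0 K2"
definition WSD where "WSD a b x0 K1 K2 \<longleftrightarrow> weakly_deg a x0 K1 \<and> strongly_deg b x0 K2"
definition SWD where "SWD a b x0 K1 K2 \<longleftrightarrow> strongly_deg a x0 K1 \<and> weakly_deg b x0 K2"

definition power_bounds :: "(real \<Rightarrow> real) \<Rightarrow> (real \<Rightarrow> real) \<Rightarrow> real \<Rightarrow> real \<Rightarrow> real \<Rightarrow> bool" where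
  "power_bounds a b x0 K1 K2 \<longleftrightarrow> (\<exists>c1 c2. c1 > 0 \<and> c2 > 0 \<and>
     (\<forall>x\<in>{0..1}. \<bar>x - x0\<bar> powr K1 \<ge> c1 * a x \<and> \<bar>x - x0\<bar> powr K2 \<ge> c2 * b x))"

definition H2 where "H2 a b x0 \<longleftrightarrow> (\<exists>K1 K2. WWD a b x0 K1 K2 \<and> 1 \<le> K1 + K2 \<and> K1 + K2 \<le> 2
     \<and> power_bounds a b x0 K1 K2)"
definition H3 where "H3 a b x0 \<longleftrightarrow> (\<exists>K1 K2. (WSD a b x0 K1 K2 \<or> SWD a b x0 K1 K2) \<and> K1 + K2 \<le> 2
     \<and> power_bounds a b x0 K1 K2)"
definition H4 where "H4 a b x0 \<longleftrightarrow> SSD a b x0 1 1"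

end

(*
  The degeneracy inequality (x - x0) a' <= K a is a differential inequality for a on each side
  of x0; integrating it (Gronwall) shows that a(x) / |x - x0|^K does not increase as x moves
  away from x0, so a >= c |x - x0|^K.  The power bounds, or the Lipschitz bound when K = 1, give the matching
  upper bound.  Hence a b is comparable to |x - x0|^(K1 + K2) with 1 <= K1 + K2 <= 2, i.e.
  e (x - x0)^2 <= a b <= d |x - x0| on [0,1].

  The upper bound forces u(x0) = 0 whenever u^2 / (a b) is integrable, because 1 / |x - x0| is
  not; the lower bound then reduces the claim to the classical Hardy inequality
  int u^2 / (x - x0)^2 <= 4 int u'^2 on each side of x0, which follows from Cauchy-Schwarz with
  the weights (t - x0)^(+-1/4) and Tonelli.
*)

theory Submission
  imports Defs
begin

section \<open>Weak derivatives on [0,1]\<close>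

lemma integral_le_AE:
  fixes f g :: "real \<Rightarrow> real"
  assumes f: "f integrable_on S" and g: "g integrable_on S"
    and ae: "AE t in lebesgue. t \<in> S \<longrightarrow> f t \<le> g t"
  shows "integral S f \<le> integral S g"
proof -
  obtain N where N: "{t \<in> space lebesgue. \<not> (t \<in> S \<longrightarrow> f t \<le> g t)} \<subseteq> N"
      "emeasure lebesgue N = 0" "N \<in> sets lebesgue"
    using ae by (rule AE_E)
  then have negN: "negligible N" by (simp add: negligible_iff_null_sets null_sets_def)
  define f' where "f' t = (if t \<in> N then g t else f t)" for t
  have "integral S f = integral S f'"
    by (rule integral_spike[OF negN]) (auto simp: f'_def)
  also have "\<dots> \<le> integral S g"
  proof (rule integral_le)
    show "f' integrable_on S" by (rule integrable_spike[OF f negN]) (auto simp: f'_def)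
  qed (use g N(1) in \<open>auto simp: f'_def\<close>)
  finally show ?thesis .
qed

lemma weak_deriv_01_increment:
  assumes wd: "weak_deriv_01 u g" and xy: "0 \<le> x" "x \<le> y" "y \<le> 1"
  shows "u y - u x = integral {x..y} g" and "g integrable_on {x..y}"
proof -
  have g01: "g integrable_on {0..1}"
    using wd by (simp add: weak_deriv_01_def absolutely_integrable_on_def)
  show "g integrable_on {x..y}"
    using g01 by (rule integrable_on_subinterval) (use xy in auto)
  have "integral {0..x} g + integral {x..y} g = integral {0..y} g"
    using xy by (intro Henstock_Kurzweil_Integration.integral_combine
        integrable_on_subinterval[OF g01]) auto
  moreover have "u y = u 0 + integral {0..y} g" "u x = u 0 + integral {0..x} g"
    using wd xy unfolding weak_deriv_01_def by (meson atLeastAtMost_iff order_trans)+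
  ultimately show "u y - u x = integral {x..y} g" by linarith
qed

lemma weak_deriv_01_continuous:
  assumes wd: "weak_deriv_01 u g"
  shows "continuous_on {0..1} u"
proof -
  have "continuous_on {0..1} (\<lambda>x. u 0 + integral {0..x} g)"
    using wd by (intro continuous_intros indefinite_integral_continuous_1)
      (simp add: weak_deriv_01_def absolutely_integrable_on_def)
  then show ?thesis
    by (rule continuous_on_eq) (use wd in \<open>unfold weak_deriv_01_def, metis\<close>)
qed

lemma weak_deriv_01_increment_le:
  assumes wd: "weak_deriv_01 u g" and xy: "0 \<le> x" "x \<le> y" "y \<le> 1"
    and f: "f integrable_on {x..y}" and ae: "AE t in lebesgue. t \<in> {x..y} \<longrightarrow> g t \<le> f t"
  shows "u y - u x \<le> integral {x..y} f"
  using weak_deriv_01_increment[OF wd xy] integral_le_AE[OF _ f ae] by simp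

lemma weak_deriv_01_increment_ge:
  assumes wd: "weak_deriv_01 u g" and xy: "0 \<le> x" "x \<le> y" "y \<le> 1"
    and f: "f integrable_on {x..y}" and ae: "AE t in lebesgue. t \<in> {x..y} \<longrightarrow> f t \<le> g t"
  shows "integral {x..y} f \<le> u y - u x"
  using weak_deriv_01_increment[OF wd xy] integral_le_AE[OF f _ ae] by simp

lemma weak_deriv_01_lipschitz:
  assumes wd: "weak_deriv_01 u g" and M: "AE t in lebesgue. t \<in> {0..1} \<longrightarrow> \<bar>g t\<bar> \<le> M"
    and x: "x \<in> {0..1}" and y: "y \<in> {0..1}"
  shows "u x \<le> u y + M * \<bar>x - y\<bar>"
proof (cases "y \<le> x")
  case True
  have "u x - u y \<le> integral {y..x} (\<lambda>_. M)"
    using x y True M by (intro weak_deriv_01_increment_le[OF wd]) (auto elim!: eventually_mono)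
  then show ?thesis using True by (simp add: algebra_simps)
next
  case False
  have "integral {x..y} (\<lambda>_. - M) \<le> u y - u x"
    using x y False M by (intro weak_deriv_01_increment_ge[OF wd]) (auto elim!: eventually_mono)
  then show ?thesis using False by (simp add: algebra_simps)
qed

section \<open>Power behaviour of the degenerate coefficients\<close>

lemma gronwall_powr_right:
  fixes c :: "real \<Rightarrow> real" and p q K x :: real
  assumes pq: "p < q" and K: "0 < K" and cc: "continuous_on {p<..q} c"
    and hyp: "\<And>x y. p < x \<Longrightarrow> x \<le> y \<Longrightarrow> y \<le> q \<Longrightarrow>
      c y - c x \<le> K * integral {x..y} (\<lambda>t. c t / (t - p))"
    and x: "p < x" "x \<le> q"
  shows "c q \<le> c x * ((q - p) / (x - p)) powr K"
proof (cases "x = q")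
  case True then show ?thesis using pq by simp
next
  case False
  with x have xq: "x < q" by simp
  define F where "F y = integral {x..y} (\<lambda>t. c t / (t - p))" for y
  \<comment> \<open>H dominates c y (y - p) powr -K and is nonincreasing by the hypothesis\<close>
  define H where "H y = (c x + K * F y) * (y - p) powr (-K)" for y
  have cf: "continuous_on {x..q} (\<lambda>t. c t / (t - p))"
    using x by (intro continuous_intros continuous_on_subset[OF cc]) auto
  have Hc: "continuous_on {x..q} H"
    unfolding H_def F_def using x
    by (intro continuous_intros indefinite_integral_continuous_1
        integrable_continuous_real[OF cf]) auto
  have HD: "(H has_real_derivative
      K * (z - p) powr (-K - 1) * (c z - c x - K * F z)) (at z)"
    if z: "x < z" "z < q" for z
  proof -
    have "(F has_real_derivative (c z / (z - p))) (at z within {x..q})"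
      unfolding F_def using z by (intro integral_has_real_derivative cf) auto
    then have FD: "(F has_real_derivative (c z / (z - p))) (at z)"
      using at_within_Icc_at[of x z q] z by simp
    have zp: "0 < z - p" using z x by simp
    have PD: "((\<lambda>y. (y - p) powr (-K)) has_real_derivative (-K * (z - p) powr (-K - 1))) (at z)"
      using zp by (auto intro!: derivative_eq_intros simp: algebra_simps)
    have "(H has_real_derivative K * (c z / (z - p)) * (z - p) powr (-K)
        + (c x + K * F z) * (-K * (z - p) powr (-K - 1))) (at z)"
      unfolding H_def using zp by (auto intro!: derivative_eq_intros FD PD)
    moreover have e: "(z - p) powr (-K) = (z - p) * (z - p) powr (-K - 1)"
      using zp by (simp add: powr_mult_base)
    have "K * (c z / (z - p)) * (z - p) powr (-K) + (c x + K * F z) * (-K * (z - p) powr (-K - 1))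
        = K * (z - p) powr (-K - 1) * (c z - c x - K * F z)"
      using zp unfolding e by (simp add: field_simps)
    ultimately show ?thesis by (rule DERIV_cong)
  qed
  have "H q \<le> H x"
  proof -
    obtain l z where z: "x < z" "z < q" and Dz: "DERIV H z :> l" and eq: "H q - H x = (q - x) * l"
      using MVT[OF xq Hc] HD by (metis real_differentiable_def)
    have "c z - c x - K * F z \<le> 0"
      using hyp[of x z] x z unfolding F_def by simp
    then have "l \<le> 0"
      using DERIV_unique[OF Dz HD[OF z]] K by (simp add: mult_nonneg_nonpos)
    then have "(q - x) * l \<le> 0" using xq by (simp add: mult_nonneg_nonpos)
    then show ?thesis using eq by simp
  qed
  have "c q \<le> c x + K * F q" using hyp[of x q] x xq unfolding F_def by simp
  also have "\<dots> = H q * (q - p) powr K"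
    unfolding H_def using pq by (simp add: powr_minus field_simps)
  also have "\<dots> \<le> H x * (q - p) powr K"
    by (intro mult_right_mono \<open>H q \<le> H x\<close>) simp
  also have "\<dots> = c x * ((q - p) / (x - p)) powr K"
    unfolding H_def F_def using x pq by (simp add: powr_divide powr_minus field_simps)
  finally show ?thesis .
qed

lemma gronwall_powr_left:
  fixes c :: "real \<Rightarrow> real" and p q K x :: real
  assumes qp: "q < p" and K: "0 < K" and cc: "continuous_on {q..<p} c"
    and hyp: "\<And>x y. q \<le> x \<Longrightarrow> x \<le> y \<Longrightarrow> y < p \<Longrightarrow>
      c x - c y \<le> K * integral {x..y} (\<lambda>t. c t / (p - t))"
    and x: "q \<le> x" "x < p"
  shows "c q \<le> c x * ((p - q) / (p - x)) powr K"
proof -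
  have "(\<lambda>s. c (-s)) (-q) \<le> (\<lambda>s. c (-s)) (-x) * ((-q - -p) / (-x - -p)) powr K"
  proof (rule gronwall_powr_right[OF _ K])
    show "continuous_on {-p<..-q} (\<lambda>s. c (-s))"
      by (rule continuous_on_compose2[OF cc]) (auto intro!: continuous_intros)
    fix s y assume sy: "-p < s" "s \<le> y" "y \<le> -q"
    have "(\<lambda>t. c (-t) / (t - -p)) = (\<lambda>t. (\<lambda>t. c t / (p - t)) (-t))"
      by (simp add: algebra_simps)
    then have reflect:
      "integral {s..y} (\<lambda>t. c (-t) / (t - -p)) = integral {-y..-s} (\<lambda>t. c t / (p - t))"
      using Henstock_Kurzweil_Integration.integral_reflect_real[of "-s" "-y" "\<lambda>t. c t / (p - t)"]
      by (simp only: minus_minus)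
    have "c (-y) - c (-s) \<le> K * integral {-y..-s} (\<lambda>t. c t / (p - t))"
      by (rule hyp) (use sy in auto)
    then show "c (-y) - c (-s) \<le> K * integral {s..y} (\<lambda>t. c (-t) / (t - -p))"
      unfolding reflect .
  qed (use qp x in auto)
  then show ?thesis by (simp add: algebra_simps)
qed

context
  fixes a a' :: "real \<Rightarrow> real" and x0 K :: real
  assumes x0: "0 < x0" "x0 < 1" and a_pos: "\<forall>x\<in>{0..1} - {x0}. 0 < a x"
    and wd: "weak_deriv_01 a a'" and K: "0 < K"
    and deg: "AE x in lebesgue. x \<in> {0..1} \<longrightarrow> (x - x0) * a' x \<le> K * a x"
begin

lemma degenerate_lower_bound_right:
  assumes x: "x0 < x" "x \<le> 1"
  shows "a 1 * (x - x0) powr K \<le> a x"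
proof -
  have ac: "continuous_on {0..1} a" by (rule weak_deriv_01_continuous[OF wd])
  have "a 1 \<le> a x * ((1 - x0) / (x - x0)) powr K"
  proof (rule gronwall_powr_right[OF x0(2) K _ _ x])
    show "continuous_on {x0<..1} a" by (rule continuous_on_subset[OF ac]) (use x0 in auto)
    fix s y assume sy: "x0 < s" "s \<le> y" "y \<le> 1"
    have "a y - a s \<le> integral {s..y} (\<lambda>t. K * (a t / (t - x0)))"
    proof (rule weak_deriv_01_increment_le[OF wd])
      show "(\<lambda>t. K * (a t / (t - x0))) integrable_on {s..y}"
        using sy x0 by (intro integrable_continuous_real continuous_intros
            continuous_on_subset[OF ac]) auto
      show "AE t in lebesgue. t \<in> {s..y} \<longrightarrow> a' t \<le> K * (a t / (t - x0))"
        using deg by eventually_elim (use sy x0 in \<open>auto simp: pos_le_divide_eq mult.commute\<close>)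
    qed (use sy x0 in auto)
    then show "a y - a s \<le> K * integral {s..y} (\<lambda>t. a t / (t - x0))"
      using integral_cmul[of "{s..y}" K "\<lambda>t. a t / (t - x0)"] by (simp only: real_scaleR_def)
  qed
  then have "a 1 * (x - x0) powr K \<le> a x * ((1 - x0) / (x - x0)) powr K * (x - x0) powr K"
    by (intro mult_right_mono) auto
  also have "\<dots> = a x * (1 - x0) powr K"
    using x by (simp add: powr_divide)
  also have "\<dots> \<le> a x"
  proof (rule mult_left_le)
    have "x \<in> {0..1} - {x0}" using x x0 by auto
    then show "0 \<le> a x" using a_pos by (simp add: less_imp_le)
  qed (use x0 x K in \<open>auto simp: powr_le1\<close>)
  finally show ?thesis .
qed

lemma degenerate_lower_bound_left:
  assumes x: "0 \<le> x" "x < x0"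
  shows "a 0 * (x0 - x) powr K \<le> a x"
proof -
  have ac: "continuous_on {0..1} a" by (rule weak_deriv_01_continuous[OF wd])
  have "a 0 \<le> a x * ((x0 - 0) / (x0 - x)) powr K"
  proof (rule gronwall_powr_left[OF x0(1) K _ _ x])
    show "continuous_on {0..<x0} a" by (rule continuous_on_subset[OF ac]) (use x0 in auto)
    fix s y assume sy: "0 \<le> s" "s \<le> y" "y < x0"
    have "integral {s..y} (\<lambda>t. - (K * (a t / (x0 - t)))) \<le> a y - a s"
    proof (rule weak_deriv_01_increment_ge[OF wd])
      show "(\<lambda>t. - (K * (a t / (x0 - t)))) integrable_on {s..y}"
        using sy x0 by (intro integrable_continuous_real continuous_intros
            continuous_on_subset[OF ac]) auto
      show "AE t in lebesgue. t \<in> {s..y} \<longrightarrow> - (K * (a t / (x0 - t))) \<le> a' t"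
        using deg
      proof eventually_elim
        case (elim t)
        show ?case
        proof
          assume t: "t \<in> {s..y}"
          then have "- a' t * (x0 - t) \<le> K * a t" using elim sy x0 by (auto simp: algebra_simps)
          then show "- (K * (a t / (x0 - t))) \<le> a' t"
            using t sy by (simp add: minus_le_iff pos_le_divide_eq)
        qed
      qed
    qed (use sy x0 in auto)
    moreover have "integral {s..y} (\<lambda>t. - (K * (a t / (x0 - t))))
        = - (K * integral {s..y} (\<lambda>t. a t / (x0 - t)))"
      using integral_cmul[of "{s..y}" K "\<lambda>t. a t / (x0 - t)"]
      by (simp only: integral_neg real_scaleR_def)
    ultimately show "a s - a y \<le> K * integral {s..y} (\<lambda>t. a t / (x0 - t))" by linarith
  qed
  then have "a 0 * (x0 - x) powr K \<le> a x * (x0 / (x0 - x)) powr K * (x0 - x) powr K"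
    by (intro mult_right_mono) auto
  also have "\<dots> = a x * x0 powr K"
    using x x0 by (simp add: powr_divide)
  also have "\<dots> \<le> a x"
  proof (rule mult_left_le)
    have "x \<in> {0..1} - {x0}" using x x0 by auto
    then show "0 \<le> a x" using a_pos by (simp add: less_imp_le)
  qed (use x0 x K in \<open>auto simp: powr_le1\<close>)
  finally show ?thesis .
qed

lemma degenerate_power_lower_bound:
  assumes "a x0 = 0"
  shows "\<exists>c>0. \<forall>x\<in>{0..1}. c * \<bar>x - x0\<bar> powr K \<le> a x"
proof (intro exI[of _ "min (a 0) (a 1)"] conjI ballI)
  show "0 < min (a 0) (a 1)" using a_pos x0 by auto
  fix x :: real assume x: "x \<in> {0..1}"
  consider "x0 < x" | "x < x0" | "x = x0" by linarith
  then show "min (a 0) (a 1) * \<bar>x - x0\<bar> powr K \<le> a x"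
  proof cases
    case 1
    then have "min (a 0) (a 1) * \<bar>x - x0\<bar> powr K \<le> a 1 * (x - x0) powr K"
      by (simp add: mult_right_mono)
    also have "\<dots> \<le> a x" using degenerate_lower_bound_right 1 x by auto
    finally show ?thesis .
  next
    case 2
    then have "min (a 0) (a 1) * \<bar>x - x0\<bar> powr K \<le> a 0 * (x0 - x) powr K"
      by (simp add: mult_right_mono)
    also have "\<dots> \<le> a x" using degenerate_lower_bound_left 2 x by auto
    finally show ?thesis .
  qed (simp add: assms)
qed

end

lemma degenerate_coefficient_lower_bound:
  assumes "0 < x0" "x0 < 1" "f x0 = 0" "\<forall>x\<in>{0..1} - {x0}. 0 < f x"
    and "weakly_deg f x0 K \<or> strongly_deg f x0 K"
  shows "\<exists>c>0. \<forall>x\<in>{0..1}. c * \<bar>x - x0\<bar> powr K \<le> f x"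
proof -
  obtain f' where "weak_deriv_01 f f'" "0 < K"
      "AE x in lebesgue. x \<in> {0..1} \<longrightarrow> (x - x0) * f' x \<le> K * f x"
    using assms(5) unfolding weakly_deg_def strongly_deg_def W11_01_def W1inf_01_def by auto
  then show ?thesis using degenerate_power_lower_bound[OF assms(1,2,4)] assms(3) by blast
qed

lemma strongly_deg_linear_upper_bound:
  assumes "x0 \<in> {0..1}" "f x0 = 0" "strongly_deg f x0 K"
  shows "\<exists>D. \<forall>x\<in>{0..1}. f x \<le> D * \<bar>x - x0\<bar> powr 1"
proof -
  obtain f' M where "weak_deriv_01 f f'" "AE x in lebesgue. x \<in> {0..1} \<longrightarrow> \<bar>f' x\<bar> \<le> M"
    using assms(3) unfolding strongly_deg_def W1inf_01_def by blast
  then have "\<forall>x\<in>{0..1}. f x \<le> M * \<bar>x - x0\<bar> powr 1"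
    using weak_deriv_01_lipschitz[of f f' M _ x0] assms(1,2) by auto
  then show ?thesis by blast
qed

lemma power_bounds_upper_bounds:
  assumes "power_bounds a b x0 K1 K2"
  shows "\<exists>D. \<forall>x\<in>{0..1}. a x \<le> D * \<bar>x - x0\<bar> powr K1"
    and "\<exists>D. \<forall>x\<in>{0..1}. b x \<le> D * \<bar>x - x0\<bar> powr K2"
proof -
  obtain c1 c2 where c: "0 < c1" "0 < c2"
    and h: "\<forall>x\<in>{0..1}. c1 * a x \<le> \<bar>x - x0\<bar> powr K1 \<and> c2 * b x \<le> \<bar>x - x0\<bar> powr K2"
    using assms unfolding power_bounds_def by auto
  show "\<exists>D. \<forall>x\<in>{0..1}. a x \<le> D * \<bar>x - x0\<bar> powr K1"
    using h c by (intro exI[of _ "1 / c1"]) (auto simp: field_simps)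
  show "\<exists>D. \<forall>x\<in>{0..1}. b x \<le> D * \<bar>x - x0\<bar> powr K2"
    using h c by (intro exI[of _ "1 / c2"]) (auto simp: field_simps)
qed

definition power_comparable :: "(real \<Rightarrow> real) \<Rightarrow> real \<Rightarrow> real \<Rightarrow> bool" where
  "power_comparable f x0 K \<longleftrightarrow> (\<exists>c>0. \<exists>D. \<forall>x\<in>{0..1}.
     c * \<bar>x - x0\<bar> powr K \<le> f x \<and> f x \<le> D * \<bar>x - x0\<bar> powr K)"

lemma power_comparableI:
  assumes "\<exists>c>0. \<forall>x\<in>{0..1}. c * \<bar>x - x0\<bar> powr K \<le> f x"
    and "\<exists>D. \<forall>x\<in>{0..1}. f x \<le> D * \<bar>x - x0\<bar> powr K"
  shows "power_comparable f x0 K"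
  using assms unfolding power_comparable_def by blast

lemma power_comparable_mult:
  assumes "power_comparable f x0 K1" "power_comparable g x0 K2"
  shows "power_comparable (\<lambda>x. f x * g x) x0 (K1 + K2)"
proof -
  obtain c1 D1 where c1: "0 < c1"
    and f: "\<And>x. x \<in> {0..1} \<Longrightarrow> c1 * \<bar>x - x0\<bar> powr K1 \<le> f x \<and> f x \<le> D1 * \<bar>x - x0\<bar> powr K1"
    using assms(1) unfolding power_comparable_def by blast
  obtain c2 D2 where c2: "0 < c2"
    and g: "\<And>x. x \<in> {0..1} \<Longrightarrow> c2 * \<bar>x - x0\<bar> powr K2 \<le> g x \<and> g x \<le> D2 * \<bar>x - x0\<bar> powr K2"
    using assms(2) unfolding power_comparable_def by blast
  show ?thesis unfolding power_comparable_def
  proof (rule exI[of _ "c1 * c2"], intro conjI exI[of _ "D1 * D2"] ballI)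
    fix x :: real assume x: "x \<in> {0..1}"
    have lower: "0 \<le> c1 * \<bar>x - x0\<bar> powr K1" "0 \<le> c2 * \<bar>x - x0\<bar> powr K2"
      using c1 c2 by auto
    have "c1 * c2 * \<bar>x - x0\<bar> powr (K1 + K2) = (c1 * \<bar>x - x0\<bar> powr K1) * (c2 * \<bar>x - x0\<bar> powr K2)"
      by (simp add: powr_add)
    also have "\<dots> \<le> f x * g x"
      using f[OF x] g[OF x] lower by (intro mult_mono) auto
    finally show "c1 * c2 * \<bar>x - x0\<bar> powr (K1 + K2) \<le> f x * g x" .
    have "f x * g x \<le> (D1 * \<bar>x - x0\<bar> powr K1) * (D2 * \<bar>x - x0\<bar> powr K2)"
      using f[OF x] g[OF x] lower by (intro mult_mono) auto
    also have "\<dots> = D1 * D2 * \<bar>x - x0\<bar> powr (K1 + K2)"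
      by (simp add: powr_add)
    finally show "f x * g x \<le> D1 * D2 * \<bar>x - x0\<bar> powr (K1 + K2)" .
  qed (use c1 c2 in auto)
qed

lemma power_comparable_quadratic_linear_bounds:
  assumes w: "power_comparable w x0 K" and K: "1 \<le> K" "K \<le> 2" and x0: "x0 \<in> {0..1}"
  shows "\<exists>e>0. \<exists>d>0. \<forall>x\<in>{0..1}. e * (x - x0)\<^sup>2 \<le> w x \<and> w x \<le> d * \<bar>x - x0\<bar>"
proof -
  obtain c D where c: "0 < c"
    and cD: "\<And>x. x \<in> {0..1} \<Longrightarrow> c * \<bar>x - x0\<bar> powr K \<le> w x \<and> w x \<le> D * \<bar>x - x0\<bar> powr K"
    using w unfolding power_comparable_def by blast
  show ?thesis
  proof (rule exI[of _ c], intro conjI exI[of _ "max D 0 + 1"] ballI)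
    fix x :: real assume x: "x \<in> {0..1}"
    have t: "0 \<le> \<bar>x - x0\<bar>" "\<bar>x - x0\<bar> \<le> 1" using x x0 by auto
    have "c * (x - x0)\<^sup>2 = c * \<bar>x - x0\<bar> powr 2" by simp
    also have "\<dots> \<le> c * \<bar>x - x0\<bar> powr K"
      using c t K by (intro mult_left_mono powr_mono') auto
    also have "\<dots> \<le> w x" using cD[OF x] by simp
    finally show "c * (x - x0)\<^sup>2 \<le> w x" .
    have "w x \<le> max D 0 * \<bar>x - x0\<bar> powr K"
      using cD[OF x] by (smt (verit) mult_right_mono powr_ge_zero)
    also have "\<dots> \<le> max D 0 * \<bar>x - x0\<bar> powr 1"
      using t K by (intro mult_left_mono powr_mono') auto
    also have "\<dots> \<le> (max D 0 + 1) * \<bar>x - x0\<bar>"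
      by (simp add: mult_right_mono)
    finally show "w x \<le> (max D 0 + 1) * \<bar>x - x0\<bar>" .
  qed (use c in auto)
qed

lemma coefficient_product_power_comparable:
  assumes x0: "0 < x0" "x0 < 1" and zero: "a x0 = 0" "b x0 = 0"
    and pos: "\<forall>x\<in>{0..1} - {x0}. 0 < a x \<and> 0 < b x"
    and H: "H2 a b x0 \<or> H3 a b x0 \<or> H4 a b x0"
  shows "\<exists>K. 1 \<le> K \<and> K \<le> 2 \<and> power_comparable (\<lambda>x. a x * b x) x0 K"
proof -
  have a_lower: "weakly_deg a x0 K \<or> strongly_deg a x0 K \<Longrightarrow>
      \<exists>c>0. \<forall>x\<in>{0..1}. c * \<bar>x - x0\<bar> powr K \<le> a x" for K
    using pos by (intro degenerate_coefficient_lower_bound[where f = a, OF x0 zero(1)]) auto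
  have b_lower: "weakly_deg b x0 K \<or> strongly_deg b x0 K \<Longrightarrow>
      \<exists>c>0. \<forall>x\<in>{0..1}. c * \<bar>x - x0\<bar> powr K \<le> b x" for K
    using pos by (intro degenerate_coefficient_lower_bound[where f = b, OF x0 zero(2)]) auto
  have comparable_from_power_bounds: "power_comparable (\<lambda>x. a x * b x) x0 (K1 + K2)"
    if "weakly_deg a x0 K1 \<or> strongly_deg a x0 K1" "weakly_deg b x0 K2 \<or> strongly_deg b x0 K2"
      "power_bounds a b x0 K1 K2" for K1 K2
    using that a_lower b_lower power_bounds_upper_bounds
    by (intro power_comparable_mult power_comparableI) blast+
  from H consider "H2 a b x0" | "H3 a b x0" | "H4 a b x0" by blast
  then show ?thesis
  proof cases
    case 1
    then show ?thesis
      unfolding H2_def WWD_def using comparable_from_power_bounds by blast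
  next
    case 2
    then obtain K1 K2 where K: "WSD a b x0 K1 K2 \<or> SWD a b x0 K1 K2" "K1 + K2 \<le> 2"
      "power_bounds a b x0 K1 K2"
      unfolding H3_def by blast
    then have "1 \<le> K1 + K2"
      unfolding WSD_def SWD_def weakly_deg_def strongly_deg_def by auto
    with K show ?thesis
      unfolding WSD_def SWD_def using comparable_from_power_bounds by blast
  next
    case 3
    then have "strongly_deg a x0 1" "strongly_deg b x0 1" unfolding H4_def SSD_def by auto
    moreover have x0_01: "x0 \<in> {0..1}" using x0 by auto
    ultimately have "power_comparable a x0 1" "power_comparable b x0 1"
      using a_lower b_lower
        strongly_deg_linear_upper_bound[where f = a, OF x0_01 zero(1)]
        strongly_deg_linear_upper_bound[where f = b, OF x0_01 zero(2)]
      by (blast intro: power_comparableI)+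
    then have "power_comparable (\<lambda>x. a x * b x) x0 (1 + 1)"
      by (rule power_comparable_mult)
    then show ?thesis by (intro exI[of _ "1 + 1"]) simp
  qed
qed

section \<open>Vanishing at the degeneracy point\<close>

lemma has_integral_inverse_shifted:
  fixes x0 s r :: real assumes "0 < s" "s \<le> r"
  shows "((\<lambda>x. 1 / (x - x0)) has_integral ln r - ln s) {x0 + s..x0 + r}"
proof -
  have "((\<lambda>x. 1 / (x - x0)) has_integral ln ((x0 + r) - x0) - ln ((x0 + s) - x0)) {x0 + s..x0 + r}"
  proof (rule fundamental_theorem_of_calculus_interior)
    fix x assume x: "x \<in> {x0 + s<..<x0 + r}"
    show "((\<lambda>x. ln (x - x0)) has_vector_derivative 1 / (x - x0)) (at x)"
      unfolding has_real_derivative_iff_has_vector_derivative[symmetric]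
      using x assms by (auto intro!: derivative_eq_intros)
  qed (use assms in \<open>auto intro!: continuous_intros\<close>)
  then show ?thesis by simp
qed

lemma continuous_zero_if_square_div_integrable:
  fixes u w :: "real \<Rightarrow> real" and x0 d :: real
  assumes x0: "0 \<le> x0" "x0 < 1" and d: "0 < d"
    and w: "\<And>x. x \<in> {0..1} \<Longrightarrow> 0 \<le> w x \<and> w x \<le> d * \<bar>x - x0\<bar>"
    and w_pos: "\<And>x. x \<in> {0..1} \<Longrightarrow> x \<noteq> x0 \<Longrightarrow> 0 < w x"
    and u: "continuous_on {0..1} u"
    and int: "(\<lambda>x. (u x)\<^sup>2 / w x) integrable_on {0..1}"
  shows "u x0 = 0"
proof (rule ccontr)
  assume "u x0 \<noteq> 0"
  define \<delta> where "\<delta> = (u x0)\<^sup>2 / 2"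
  have \<delta>: "0 < \<delta>" using \<open>u x0 \<noteq> 0\<close> by (simp add: \<delta>_def)
  define I where "I = integral {0..1} (\<lambda>x. (u x)\<^sup>2 / w x)"
  obtain r where r: "0 < r" and near: "\<And>x. x \<in> {0..1} \<Longrightarrow> dist x x0 < r \<Longrightarrow>
      dist ((u x)\<^sup>2) ((u x0)\<^sup>2) < \<delta>"
    using continuous_on_iff[THEN iffD1, OF continuous_on_power[OF u, of 2]] x0 \<delta> by force
  define r' where "r' = min (r / 2) (1 - x0)"
  have r': "0 < r'" "x0 + r' \<le> 1" "r' < r" using r x0 by (auto simp: r'_def)
  \<comment> \<open>near x0 the integrand dominates a multiple of 1 / (x - x0), whose integral diverges\<close>
  have lower: "\<delta> / d * (1 / (x - x0)) \<le> (u x)\<^sup>2 / w x" if x: "x0 < x" "x \<le> x0 + r'" for x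
  proof -
    have x01: "x \<in> {0..1}" using x x0 r' by auto
    have "\<bar>(u x)\<^sup>2 - (u x0)\<^sup>2\<bar> < \<delta>"
      using near[OF x01] x r' by (simp add: dist_real_def)
    then have "\<delta> \<le> (u x)\<^sup>2" unfolding \<delta>_def by linarith
    moreover have "0 < w x" "w x \<le> d * (x - x0)" using w[OF x01] w_pos[OF x01] x by auto
    ultimately have "\<delta> / (d * (x - x0)) \<le> (u x)\<^sup>2 / w x"
      using d x \<delta> by (intro frac_le) auto
    then show ?thesis by simp
  qed
  have bound: "\<delta> / d * (ln r' - ln s) \<le> I" if s: "0 < s" "s \<le> r'" for s
  proof -
    have sub: "{x0 + s..x0 + r'} \<subseteq> {0..1}" using s r' x0 by auto
    have hi: "((\<lambda>x. \<delta> / d * (1 / (x - x0))) has_integral \<delta> / d * (ln r' - ln s)) {x0 + s..x0 + r'}"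
      by (rule has_integral_mult_right[OF has_integral_inverse_shifted[OF s]])
    then have "\<delta> / d * (ln r' - ln s) = integral {x0 + s..x0 + r'} (\<lambda>x. \<delta> / d * (1 / (x - x0)))"
      by (simp add: integral_unique)
    also have "\<dots> \<le> integral {x0 + s..x0 + r'} (\<lambda>x. (u x)\<^sup>2 / w x)"
      using hi s integrable_on_subinterval[OF int sub] by (intro integral_le lower) auto
    also have "\<dots> \<le> I"
      unfolding I_def using sub w w_pos
      by (intro integral_subset_le integrable_on_subinterval[OF int sub] int) force+
    finally show ?thesis .
  qed
  define s where "s = r' * exp (- (\<bar>I\<bar> * d / \<delta> + 1))"
  have "0 \<le> \<bar>I\<bar> * d / \<delta>" using d \<delta> by simp
  then have "0 < s" "s \<le> r'" using r' by (auto simp: s_def mult_le_cancel_left1)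
  moreover have "ln r' - ln s = \<bar>I\<bar> * d / \<delta> + 1" using r' by (simp add: s_def ln_mult)
  ultimately have "\<delta> / d * (\<bar>I\<bar> * d / \<delta> + 1) \<le> I" using bound by metis
  moreover have "\<delta> / d * (\<bar>I\<bar> * d / \<delta> + 1) = \<bar>I\<bar> + \<delta> / d" using \<delta> d by (simp add: field_simps)
  ultimately show False using \<delta> d by (smt (verit) divide_pos_pos)
qed

section \<open>Hardy's inequality\<close>

lemma borel_measurable_continuous_on_indicator_ennreal:
  fixes f :: "real \<Rightarrow> real"
  assumes "S \<in> sets borel" "continuous_on S f"
  shows "(\<lambda>x. ennreal (indicator S x * f x)) \<in> borel_measurable borel"
proof -
  have "(\<lambda>x. indicator S x *\<^sub>R f x) \<in> borel_measurable borel"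
    using assms by (rule borel_measurable_continuous_on_indicator)
  then show ?thesis by simp
qed

lemma nn_integral_lborel_reflect:
  fixes f :: "real \<Rightarrow> ennreal"
  assumes [measurable]: "f \<in> borel_measurable borel"
  shows "(\<integral>\<^sup>+x. f x \<partial>lborel) = (\<integral>\<^sup>+x. f (- x) \<partial>lborel)"
  using nn_integral_real_affine[of f "-1" 0] by simp

lemma has_integral_inverse_sqrt:
  fixes p x :: real assumes "p \<le> x"
  shows "((\<lambda>t. 1 / sqrt (t - p)) has_integral 2 * sqrt (x - p)) {p..x}"
proof -
  have "((\<lambda>t. 1 / sqrt (t - p)) has_integral 2 * sqrt (x - p) - 2 * sqrt (p - p)) {p..x}"
  proof (rule fundamental_theorem_of_calculus_interior)
    fix t assume t: "t \<in> {p<..<x}"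
    show "((\<lambda>t. 2 * sqrt (t - p)) has_vector_derivative 1 / sqrt (t - p)) (at t)"
      unfolding has_real_derivative_iff_has_vector_derivative[symmetric]
      using t by (auto intro!: derivative_eq_intros simp: divide_simps)
  qed (use assms in \<open>auto intro!: continuous_intros\<close>)
  then show ?thesis by simp
qed

lemma has_integral_hardy_kernel:
  fixes p t q :: real assumes "p < t" "t \<le> q"
  shows "((\<lambda>x. 2 / ((x - p) * sqrt (x - p))) has_integral 4 / sqrt (t - p) - 4 / sqrt (q - p))
    {t..q}"
proof -
  have "((\<lambda>x. 2 / ((x - p) * sqrt (x - p))) has_integral
      (- 4 / sqrt (q - p)) - (- 4 / sqrt (t - p))) {t..q}"
  proof (rule fundamental_theorem_of_calculus_interior)
    fix x assume x: "x \<in> {t<..<q}"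
    then have "0 < x - p" using assms by simp
    then show "((\<lambda>x. - 4 / sqrt (x - p)) has_vector_derivative 2 / ((x - p) * sqrt (x - p))) (at x)"
      unfolding has_real_derivative_iff_has_vector_derivative[symmetric]
      by (auto intro!: derivative_eq_intros simp: divide_simps)
  qed (use assms in \<open>auto intro!: continuous_intros\<close>)
  then show ?thesis by simp
qed

lemma cauchy_schwarz_sqrt_weight:
  fixes h :: "real \<Rightarrow> real" and p x :: real
  assumes px: "p \<le> x" and [measurable]: "h \<in> borel_measurable borel"
  shows "(\<integral>\<^sup>+t. ennreal (indicator {p<..x} t * \<bar>h t\<bar>) \<partial>lborel)\<^sup>2
    \<le> (\<integral>\<^sup>+t. ennreal (indicator {p<..x} t * ((h t)\<^sup>2 * sqrt (t - p))) \<partial>lborel)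
        * ennreal (2 * sqrt (x - p))"
proof -
  \<comment> \<open>Cauchy-Schwarz for the factorisation |h t| = (|h t| (t - p) powr 1/4) ((t - p) powr -1/4)\<close>
  define F where "F t = ennreal (indicator {p<..x} t * (\<bar>h t\<bar> * sqrt (sqrt (t - p))))" for t
  define G where "G t = ennreal (indicator {p<..x} t / sqrt (sqrt (t - p)))" for t
  have "(\<integral>\<^sup>+t. F t * G t \<partial>lborel)\<^sup>2 \<le> (\<integral>\<^sup>+t. F t ^ 2 \<partial>lborel) * (\<integral>\<^sup>+t. G t ^ 2 \<partial>lborel)"
    by (rule Cauchy_Schwarz_nn_integral) (simp_all add: F_def G_def)
  moreover have "(\<integral>\<^sup>+t. F t * G t \<partial>lborel) = (\<integral>\<^sup>+t. ennreal (indicator {p<..x} t * \<bar>h t\<bar>) \<partial>lborel)"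
    by (intro nn_integral_cong)
      (auto simp: F_def G_def ennreal_mult[symmetric] split: split_indicator)
  moreover have "(\<integral>\<^sup>+t. F t ^ 2 \<partial>lborel)
      = (\<integral>\<^sup>+t. ennreal (indicator {p<..x} t * ((h t)\<^sup>2 * sqrt (t - p))) \<partial>lborel)"
    by (intro nn_integral_cong)
      (auto simp: F_def ennreal_power power_mult_distrib split: split_indicator)
  moreover have "(\<integral>\<^sup>+t. G t ^ 2 \<partial>lborel)
      = (\<integral>\<^sup>+t. ennreal (1 / sqrt (t - p)) * indicator {p..x} t \<partial>lborel)"
    by (intro nn_integral_cong_AE, use AE_lborel_singleton[of p] in eventually_elim)
      (auto simp: G_def ennreal_power power_divide split: split_indicator)
  moreover have "\<dots> = ennreal (2 * sqrt (x - p))"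
    by (intro nn_integral_has_integral_lebesgue' has_integral_inverse_sqrt px) auto
  ultimately show ?thesis by simp
qed

lemma hardy_inequality_right:
  fixes v h :: "real \<Rightarrow> real" and p q :: real
  assumes h[measurable]: "h \<in> borel_measurable borel"
    and v: "\<And>x. p < x \<Longrightarrow> x \<le> q \<Longrightarrow>
      ennreal \<bar>v x\<bar> \<le> (\<integral>\<^sup>+t. ennreal (indicator {p<..x} t * \<bar>h t\<bar>) \<partial>lborel)"
  shows "(\<integral>\<^sup>+x. ennreal (indicator {p<..q} x * ((v x)\<^sup>2 / (x - p)\<^sup>2)) \<partial>lborel)
    \<le> 4 * (\<integral>\<^sup>+t. ennreal ((h t)\<^sup>2) \<partial>lborel)"
proof -
  define k where "k x t = (if p < t \<and> t \<le> x \<and> x \<le> q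
    then (h t)\<^sup>2 * sqrt (t - p) * (2 / ((x - p) * sqrt (x - p))) else 0)" for x t
  have v_bound: "ennreal (indicator {p<..q} x * ((v x)\<^sup>2 / (x - p)\<^sup>2))
      \<le> (\<integral>\<^sup>+t. ennreal (k x t) \<partial>lborel)" for x
  proof (cases "p < x \<and> x \<le> q")
    case False then show ?thesis by (simp split: split_indicator)
  next
    case True
    define A where "A = (\<integral>\<^sup>+t. ennreal (indicator {p<..x} t * ((h t)\<^sup>2 * sqrt (t - p))) \<partial>lborel)"
    have "ennreal ((v x)\<^sup>2) = ennreal \<bar>v x\<bar> ^ 2" by (simp add: ennreal_power)
    also have "\<dots> \<le> (\<integral>\<^sup>+t. ennreal (indicator {p<..x} t * \<bar>h t\<bar>) \<partial>lborel)\<^sup>2"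
      using v True by (intro power_mono_ennreal) auto
    also have "\<dots> \<le> A * ennreal (2 * sqrt (x - p))"
      unfolding A_def using True by (intro cauchy_schwarz_sqrt_weight) auto
    finally have "ennreal ((v x)\<^sup>2) * ennreal (1 / (x - p)\<^sup>2)
        \<le> A * ennreal (2 * sqrt (x - p)) * ennreal (1 / (x - p)\<^sup>2)"
      by (rule mult_right_mono) simp
    moreover have "2 * sqrt (x - p) * (1 / (x - p)\<^sup>2) = 2 / ((x - p) * sqrt (x - p))"
    proof -
      have "(x - p)\<^sup>2 = (x - p) * sqrt (x - p) * sqrt (x - p)"
        using True by (simp add: power2_eq_square mult.assoc)
      then show ?thesis using True by (simp add: field_simps)
    qed
    ultimately have "ennreal ((v x)\<^sup>2 / (x - p)\<^sup>2) \<le> A * ennreal (2 / ((x - p) * sqrt (x - p)))"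
      using True by (simp add: mult.assoc ennreal_mult'[symmetric] divide_inverse)
    also have "\<dots> = (\<integral>\<^sup>+t. ennreal (k x t) \<partial>lborel)"
      unfolding A_def using True
      by (subst nn_integral_multc[symmetric]) (auto intro!: nn_integral_cong
          simp: k_def ennreal_mult'[symmetric] split: split_indicator)
    finally show ?thesis using True by simp
  qed
  have kernel_bound: "(\<integral>\<^sup>+x. ennreal (k x t) \<partial>lborel) \<le> 4 * ennreal ((h t)\<^sup>2)" for t
  proof (cases "p < t \<and> t \<le> q")
    case False
    then have "\<And>x. k x t = 0" by (auto simp: k_def split: split_indicator)
    then show ?thesis by simp
  next
    case True
    then have "(\<integral>\<^sup>+x. ennreal (k x t) \<partial>lborel) = ennreal ((h t)\<^sup>2 * sqrt (t - p)) *
        (\<integral>\<^sup>+x. ennreal (2 / ((x - p) * sqrt (x - p))) * indicator {t..q} x \<partial>lborel)"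
      by (subst nn_integral_cmult[symmetric]) (auto intro!: nn_integral_cong
          simp: k_def ennreal_mult'[symmetric] split: split_indicator)
    also have "\<dots> = ennreal ((h t)\<^sup>2 * sqrt (t - p)) * ennreal (4 / sqrt (t - p) - 4 / sqrt (q - p))"
      using True by (subst nn_integral_has_integral_lebesgue'[OF _ has_integral_hardy_kernel]) auto
    also have "\<dots> \<le> ennreal ((h t)\<^sup>2 * sqrt (t - p)) * ennreal (4 / sqrt (t - p))"
      using True by (intro mult_left_mono ennreal_leI) auto
    also have "\<dots> = ennreal ((h t)\<^sup>2 * sqrt (t - p) * (4 / sqrt (t - p)))"
      by (rule ennreal_mult'[symmetric]) (use True in simp)
    also have "\<dots> = 4 * ennreal ((h t)\<^sup>2)"
      using True by (simp add: ennreal_mult mult.commute)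
    finally show ?thesis .
  qed
  have "(\<integral>\<^sup>+x. ennreal (indicator {p<..q} x * ((v x)\<^sup>2 / (x - p)\<^sup>2)) \<partial>lborel)
      \<le> (\<integral>\<^sup>+x. (\<integral>\<^sup>+t. ennreal (k x t) \<partial>lborel) \<partial>lborel)"
    by (intro nn_integral_mono v_bound)
  also have "\<dots> = (\<integral>\<^sup>+t. (\<integral>\<^sup>+x. ennreal (k x t) \<partial>lborel) \<partial>lborel)"
    by (rule lborel_pair.Fubini') (unfold k_def, measurable)
  also have "\<dots> \<le> (\<integral>\<^sup>+t. 4 * ennreal ((h t)\<^sup>2) \<partial>lborel)"
    by (intro nn_integral_mono kernel_bound)
  also have "\<dots> = 4 * (\<integral>\<^sup>+t. ennreal ((h t)\<^sup>2) \<partial>lborel)"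
    by (rule nn_integral_cmult) simp
  finally show ?thesis .
qed

lemma hardy_inequality_left:
  fixes v h :: "real \<Rightarrow> real" and p q :: real
  assumes h[measurable]: "h \<in> borel_measurable borel" and vc: "continuous_on {p..<q} v"
    and v: "\<And>x. p \<le> x \<Longrightarrow> x < q \<Longrightarrow>
      ennreal \<bar>v x\<bar> \<le> (\<integral>\<^sup>+t. ennreal (indicator {x..<q} t * \<bar>h t\<bar>) \<partial>lborel)"
  shows "(\<integral>\<^sup>+x. ennreal (indicator {p..<q} x * ((v x)\<^sup>2 / (q - x)\<^sup>2)) \<partial>lborel)
    \<le> 4 * (\<integral>\<^sup>+t. ennreal ((h t)\<^sup>2) \<partial>lborel)"
proof -
  have lhs_measurable:
    "(\<lambda>x. ennreal (indicator {p..<q} x * ((v x)\<^sup>2 / (q - x)\<^sup>2))) \<in> borel_measurable borel"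
    by (rule borel_measurable_continuous_on_indicator_ennreal) (auto intro!: continuous_intros vc)
  have "(\<integral>\<^sup>+x. ennreal (indicator {p..<q} x * ((v x)\<^sup>2 / (q - x)\<^sup>2)) \<partial>lborel)
      = (\<integral>\<^sup>+s. ennreal (indicator {-q<..-p} s * ((v (-s))\<^sup>2 / (s - -q)\<^sup>2)) \<partial>lborel)"
    by (subst nn_integral_lborel_reflect[OF lhs_measurable])
      (auto intro!: nn_integral_cong simp: add.commute split: split_indicator)
  also have "\<dots> \<le> 4 * (\<integral>\<^sup>+t. ennreal ((h (-t))\<^sup>2) \<partial>lborel)"
  proof (rule hardy_inequality_right)
    fix s assume s: "-q < s" "s \<le> -p"
    have "ennreal \<bar>v (-s)\<bar> \<le> (\<integral>\<^sup>+t. ennreal (indicator {-s..<q} t * \<bar>h t\<bar>) \<partial>lborel)"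
      using v s by auto
    also have "\<dots> = (\<integral>\<^sup>+t. ennreal (indicator {-q<..s} t * \<bar>h (-t)\<bar>) \<partial>lborel)"
      by (subst nn_integral_lborel_reflect) (auto intro!: nn_integral_cong split: split_indicator)
    finally show "ennreal \<bar>v (-s)\<bar> \<le> (\<integral>\<^sup>+t. ennreal (indicator {-q<..s} t * \<bar>h (-t)\<bar>) \<partial>lborel)" .
  qed simp
  also have "(\<integral>\<^sup>+t. ennreal ((h (-t))\<^sup>2) \<partial>lborel) = (\<integral>\<^sup>+t. ennreal ((h t)\<^sup>2) \<partial>lborel)"
    by (subst (2) nn_integral_lborel_reflect) simp_all
  finally show ?thesis .
qed

section \<open>The Hardy-Poincare inequality\<close>

lemma weak_deriv_01_borel_representative:
  assumes wd: "weak_deriv_01 u g"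
  obtains h where "h \<in> borel_measurable borel"
    and "AE x in lborel. indicator {0..1} x * g x = h x"
    and "\<And>x y. 0 \<le> x \<Longrightarrow> x \<le> y \<Longrightarrow> y \<le> 1 \<Longrightarrow>
      ennreal \<bar>u y - u x\<bar> \<le> (\<integral>\<^sup>+t. ennreal (indicator {x<..y} t * \<bar>h t\<bar>) \<partial>lborel)"
    and "\<And>x y. 0 \<le> x \<Longrightarrow> x \<le> y \<Longrightarrow> y \<le> 1 \<Longrightarrow>
      ennreal \<bar>u y - u x\<bar> \<le> (\<integral>\<^sup>+t. ennreal (indicator {x..<y} t * \<bar>h t\<bar>) \<partial>lborel)"
proof -
  have g: "g integrable_on {0..1}" "(\<lambda>x. \<bar>g x\<bar>) integrable_on {0..1}"
    using wd by (auto simp: weak_deriv_01_def absolutely_integrable_on_def)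
  have "(\<lambda>x. indicator {0..1} x *\<^sub>R g x) \<in> lebesgue \<rightarrow>\<^sub>M borel"
    by (rule has_integral_implies_lebesgue_measurable[OF integrable_integral[OF g(1)]])
  then obtain h where h: "h \<in> borel_measurable lborel"
    and hg: "AE x in lborel. indicator {0..1} x * g x = h x"
    using completion_ex_borel_measurable_real by fastforce
  have increment: "ennreal \<bar>u y - u x\<bar>
      \<le> (\<integral>\<^sup>+t. ennreal \<bar>g t\<bar> * indicator {x..y} t \<partial>lborel)"
    if xy: "0 \<le> x" "x \<le> y" "y \<le> 1" for x y
  proof -
    have gxy: "(\<lambda>t. \<bar>g t\<bar>) integrable_on {x..y}"
      using integrable_on_subinterval[OF g(2)] xy by auto
    have "\<bar>u y - u x\<bar> \<le> integral {x..y} (\<lambda>t. \<bar>g t\<bar>)"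
      using weak_deriv_01_increment[OF wd xy] integral_norm_bound_integral[OF _ gxy, of g]
      by simp
    also have "ennreal \<dots> = (\<integral>\<^sup>+t. ennreal \<bar>g t\<bar> * indicator {x..y} t \<partial>lborel)"
      by (rule nn_integral_has_integral_lebesgue'[symmetric])
        (auto intro: integrable_integral[OF gxy])
    finally show ?thesis by (simp add: ennreal_leI)
  qed
  show ?thesis
  proof (rule that[OF _ hg])
    show "h \<in> borel_measurable borel" using h by simp
    fix x y :: real assume xy: "0 \<le> x" "x \<le> y" "y \<le> 1"
    \<comment> \<open>the endpoints are null sets, so open and half-open intervals give the same integral\<close>
    have "(\<integral>\<^sup>+t. ennreal \<bar>g t\<bar> * indicator {x..y} t \<partial>lborel)
        = (\<integral>\<^sup>+t. ennreal (indicator {x<..y} t * \<bar>h t\<bar>) \<partial>lborel)"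
      using hg AE_lborel_singleton[of x]
      by (intro nn_integral_cong_AE, elim AE_mp) (use xy in \<open>auto split: split_indicator\<close>)
    with increment[OF xy]
    show "ennreal \<bar>u y - u x\<bar> \<le> (\<integral>\<^sup>+t. ennreal (indicator {x<..y} t * \<bar>h t\<bar>) \<partial>lborel)"
      by simp
    have "(\<integral>\<^sup>+t. ennreal \<bar>g t\<bar> * indicator {x..y} t \<partial>lborel)
        = (\<integral>\<^sup>+t. ennreal (indicator {x..<y} t * \<bar>h t\<bar>) \<partial>lborel)"
      using hg AE_lborel_singleton[of y]
      by (intro nn_integral_cong_AE, elim AE_mp) (use xy in \<open>auto split: split_indicator\<close>)
    with increment[OF xy]
    show "ennreal \<bar>u y - u x\<bar> \<le> (\<integral>\<^sup>+t. ennreal (indicator {x..<y} t * \<bar>h t\<bar>) \<partial>lborel)"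
      by simp
  qed
qed

lemma hardy_inequality_01:
  assumes wd: "weak_deriv_01 u g" and g2: "(\<lambda>x. (g x)\<^sup>2) integrable_on {0..1}"
    and x0: "0 < x0" "x0 < 1" and ux0: "u x0 = 0"
  shows "(\<integral>\<^sup>+x. ennreal (indicator {0..1} x * ((u x)\<^sup>2 / (x - x0)\<^sup>2)) \<partial>lborel)
    \<le> 8 * ennreal (integral {0..1} (\<lambda>x. (g x)\<^sup>2))"
proof -
  obtain h where h[measurable]: "h \<in> borel_measurable borel"
    and hg: "AE x in lborel. indicator {0..1} x * g x = h x"
    and right: "\<And>x y. 0 \<le> x \<Longrightarrow> x \<le> y \<Longrightarrow> y \<le> 1 \<Longrightarrow>
      ennreal \<bar>u y - u x\<bar> \<le> (\<integral>\<^sup>+t. ennreal (indicator {x<..y} t * \<bar>h t\<bar>) \<partial>lborel)"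
    and left: "\<And>x y. 0 \<le> x \<Longrightarrow> x \<le> y \<Longrightarrow> y \<le> 1 \<Longrightarrow>
      ennreal \<bar>u y - u x\<bar> \<le> (\<integral>\<^sup>+t. ennreal (indicator {x..<y} t * \<bar>h t\<bar>) \<partial>lborel)"
    using weak_deriv_01_borel_representative[OF wd] by blast
  have uc: "continuous_on {0..1} u" by (rule weak_deriv_01_continuous[OF wd])
  define G where "G = integral {0..1} (\<lambda>x. (g x)\<^sup>2)"
  have "(\<integral>\<^sup>+t. ennreal ((h t)\<^sup>2) \<partial>lborel) = (\<integral>\<^sup>+t. ennreal ((g t)\<^sup>2) * indicator {0..1} t \<partial>lborel)"
    using hg by (intro nn_integral_cong_AE) (auto elim!: eventually_mono split: split_indicator)
  also have "\<dots> = ennreal G"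
    unfolding G_def
    by (rule nn_integral_has_integral_lebesgue') (auto intro: integrable_integral[OF g2])
  finally have h2: "(\<integral>\<^sup>+t. ennreal ((h t)\<^sup>2) \<partial>lborel) = ennreal G" .
  define R where "R x = ennreal (indicator {x0<..1} x * ((u x)\<^sup>2 / (x - x0)\<^sup>2))" for x
  define L where "L x = ennreal (indicator {0..<x0} x * ((u x)\<^sup>2 / (x0 - x)\<^sup>2))" for x
  have [measurable]: "R \<in> borel_measurable borel"
    unfolding R_def by (rule borel_measurable_continuous_on_indicator_ennreal)
      (use x0 in \<open>auto intro!: continuous_intros continuous_on_subset[OF uc]\<close>)
  have [measurable]: "L \<in> borel_measurable borel"
    unfolding L_def by (rule borel_measurable_continuous_on_indicator_ennreal)
      (use x0 in \<open>auto intro!: continuous_intros continuous_on_subset[OF uc]\<close>)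
  have "(\<integral>\<^sup>+x. ennreal (indicator {0..1} x * ((u x)\<^sup>2 / (x - x0)\<^sup>2)) \<partial>lborel)
      = (\<integral>\<^sup>+x. R x + L x \<partial>lborel)"
    using x0 by (intro nn_integral_cong)
      (auto simp: R_def L_def power2_commute split: split_indicator)
  also have "\<dots> = (\<integral>\<^sup>+x. R x \<partial>lborel) + (\<integral>\<^sup>+x. L x \<partial>lborel)"
    by (rule nn_integral_add) auto
  also have "\<dots> \<le> 4 * ennreal G + 4 * ennreal G"
  proof (intro add_mono)
    show "(\<integral>\<^sup>+x. R x \<partial>lborel) \<le> 4 * ennreal G"
      unfolding R_def h2[symmetric]
      by (rule hardy_inequality_right[OF h]) (use right[of x0] x0 ux0 in auto)
    show "(\<integral>\<^sup>+x. L x \<partial>lborel) \<le> 4 * ennreal G"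
      unfolding L_def h2[symmetric]
    proof (rule hardy_inequality_left[OF h])
      show "continuous_on {0..<x0} u" by (rule continuous_on_subset[OF uc]) (use x0 in auto)
    qed (use left[of _ x0] x0 ux0 in auto)
  qed
  also have "\<dots> = 8 * ennreal G" by (simp flip: distrib_right)
  finally show ?thesis unfolding G_def .
qed

lemma weighted_hardy_inequality:
  fixes w u g :: "real \<Rightarrow> real" and x0 e d :: real
  assumes x0: "0 < x0" "x0 < 1" and e: "0 < e" and d: "0 < d"
    and w: "\<forall>x\<in>{0..1}. e * (x - x0)\<^sup>2 \<le> w x \<and> w x \<le> d * \<bar>x - x0\<bar>"
    and u: "H1_01 u g" and int: "(\<lambda>x. (u x)\<^sup>2 / w x) integrable_on {0..1}"
  shows "integral {0..1} (\<lambda>x. (u x)\<^sup>2 / w x) \<le> 8 / e * integral {0..1} (\<lambda>x. (g x)\<^sup>2)"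
proof -
  have wd: "weak_deriv_01 u g" and g2: "(\<lambda>x. (g x)\<^sup>2) integrable_on {0..1}"
    using u by (auto simp: H1_01_def)
  have w_nonneg: "0 \<le> w x" if "x \<in> {0..1}" for x
    using w that e by (smt (verit) mult_nonneg_nonneg zero_le_power2)
  have ux0: "u x0 = 0"
  proof (rule continuous_zero_if_square_div_integrable
      [OF _ x0(2) d _ _ weak_deriv_01_continuous[OF wd] int])
    show "0 < w x" if "x \<in> {0..1}" "x \<noteq> x0" for x
      using w that e by (smt (verit) mult_pos_pos zero_less_power2 right_minus_eq)
  qed (use x0 w w_nonneg in auto)
  have [measurable]: "(\<lambda>x. indicator {0..1} x * u x) \<in> borel_measurable borel"
    using borel_measurable_continuous_on_indicator[OF _ weak_deriv_01_continuous[OF wd]] by simp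
  have "(\<lambda>x. ennreal (indicator {0..1} x * ((u x)\<^sup>2 / (x - x0)\<^sup>2)))
      = (\<lambda>x. ennreal ((indicator {0..1} x * u x)\<^sup>2 / (x - x0)\<^sup>2))"
    by (rule ext) (simp split: split_indicator)
  then have hardy_measurable:
    "(\<lambda>x. ennreal (indicator {0..1} x * ((u x)\<^sup>2 / (x - x0)\<^sup>2))) \<in> borel_measurable borel"
    by simp
  define G where "G = integral {0..1} (\<lambda>x. (g x)\<^sup>2)"
  have G: "0 \<le> G" unfolding G_def by (rule integral_nonneg[OF g2]) auto
  have pointwise: "(u x)\<^sup>2 / w x \<le> 1 / e * ((u x)\<^sup>2 / (x - x0)\<^sup>2)" if "x \<in> {0..1}" for x
  proof (cases "x = x0")
    case False
    then show ?thesis using w that e by (simp add: frac_le)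
  qed (simp add: ux0)
  have "ennreal (integral {0..1} (\<lambda>x. (u x)\<^sup>2 / w x))
      = (\<integral>\<^sup>+x. ennreal ((u x)\<^sup>2 / w x) * indicator {0..1} x \<partial>lborel)"
    using w_nonneg
    by (intro nn_integral_has_integral_lebesgue'[symmetric] integrable_integral[OF int]) auto
  also have "\<dots> \<le> (\<integral>\<^sup>+x. ennreal (1 / e) *
      ennreal (indicator {0..1} x * ((u x)\<^sup>2 / (x - x0)\<^sup>2)) \<partial>lborel)"
    using pointwise e by (intro nn_integral_mono)
      (auto simp: ennreal_mult'[symmetric] ennreal_leI split: split_indicator)
  also have "\<dots> = ennreal (1 / e) *
      (\<integral>\<^sup>+x. ennreal (indicator {0..1} x * ((u x)\<^sup>2 / (x - x0)\<^sup>2)) \<partial>lborel)"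
    by (rule nn_integral_cmult) (unfold measurable_lborel2, rule hardy_measurable)
  also have "\<dots> \<le> ennreal (1 / e) * (8 * ennreal G)"
    unfolding G_def by (intro mult_left_mono hardy_inequality_01[OF wd g2 x0 ux0]) auto
  also have "\<dots> = ennreal (1 / e) * ennreal (8 * G)"
    using G by (simp add: ennreal_mult)
  also have "\<dots> = ennreal (8 / e * G)"
    using e by (simp add: ennreal_mult'[symmetric])
  finally have "integral {0..1} (\<lambda>x. (u x)\<^sup>2 / w x) \<le> 8 / e * G"
    using e G by (subst (asm) ennreal_le_iff) auto
  then show ?thesis unfolding G_def .
qed

theorem lemma2p12:
  fixes a b :: "real \<Rightarrow> real" and x0 :: real
  assumes "0 < x0" "x0 < 1"
    and "a x0 = 0" "b x0 = 0"
    and "\<forall>x\<in>{0..1} - {x0}. a x > 0 \<and> b x > 0"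
    and "H2 a b x0 \<or> H3 a b x0 \<or> H4 a b x0"
  shows "\<exists>C>0. \<forall>u g. H1_01 u g
      \<and> (\<lambda>x. (u x)\<^sup>2 / a x) integrable_on {0..1}
      \<and> (\<lambda>x. (u x)\<^sup>2 / (a x * b x)) integrable_on {0..1}
      \<and> (u has_real_derivative 0) (at 0 within {0..1})
      \<and> (u has_real_derivative 0) (at 1 within {0..1})
      \<longrightarrow> integral {0..1} (\<lambda>x. (u x)\<^sup>2 / (a x * b x)) \<le> C * integral {0..1} (\<lambda>x. (g x)\<^sup>2)"
proof -
  obtain K where "1 \<le> K" "K \<le> 2" "power_comparable (\<lambda>x. a x * b x) x0 K"
    using coefficient_product_power_comparable[OF assms] by blast
  moreover have "x0 \<in> {0..1}" using assms(1,2) by auto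
  ultimately obtain e d where e: "0 < e" and d: "0 < d"
    and ab: "\<forall>x\<in>{0..1}. e * (x - x0)\<^sup>2 \<le> a x * b x \<and> a x * b x \<le> d * \<bar>x - x0\<bar>"
    using power_comparable_quadratic_linear_bounds by blast
  show ?thesis
    using weighted_hardy_inequality[OF assms(1,2) e d ab] e by (intro exI[of _ "8 / e"]) auto
qed

end
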